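(* Under the same setting over $\mathbb{F}_2$ (leader set $\mathcal L$ with $|\mathcal L|=\mathrm{rank}_2(\mathbb{D}_{\mathcal L})=\mathrm{rank}_2(\mathbb{D})$, $\mathcal A\subseteq[{\mathsf K}]\setminus\mathcal L$ with $|\mathcal A|=t+1$, $\mathcal B=\mathcal L\cup\mathcal A$), for every choice of the subfiles $F_{i,\mathcal W}$, $$\bigoplus_{\mathcal V\in\mathscr V_{\mathcal B}}W_{\mathcal B\setminus\mathcal V}=0,\qquad\text{and consequently}\qquad W_{\mathcal A}=\bigoplus_{\mathcal V\in\mathscr V_{\mathcal B},\ \mathcal V\neq\mathcal L}W_{\mathcal B\setminus\mathcal V},$$ where every message on the right-hand side satisfies $(\mathcal B\setminus\mathcal V)\cap\mathcal L\neq\emptyset$.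
   Context: $\mathbb{D}\in\mathbb{F}_2^{{\mathsf K}\times{\mathsf N}}$ has rows $\mathbf y_k=(y_{k,1},\ldots,y_{k,{\mathsf N}})$; $\mathbb{D}_{\mathcal S}$ is the submatrix of rows indexed by $\mathcal S$; $t\in\{0,\ldots,{\mathsf K}-1\}$. Subfiles $F_{i,\mathcal W}$ ($i\in[{\mathsf N}]$, $\mathcal W\subseteq[{\mathsf K}]$, $|\mathcal W|=t$) are vectors over $\mathbb{F}_2$ of a common length. Blocks $B_{k,\mathcal W}=\sum_{n}y_{k,n}F_{n,\mathcal W}$. For $|\mathcal S|=t+1$, $W_{\mathcal S}=\bigoplus_{k\in\mathcal S}B_{k,\mathcal S\setminus\{k\}}$. $\mathscr V_{\mathcal B}$ is the family of subsets $\mathcal V\subseteq\mathcal B$ with $|\mathcal V|=|\mathcal L|$ and $\mathrm{rank}_2(\mathbb{D}_{\mathcal V})=|\mathcal L|$ (so $\mathcal L\in\mathscr V_{\mathcal B}$ and $W_{\mathcal B\setminus\mathcal L}=W_{\mathcal A}$). *)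

theory Defs
  imports "HOL-Library.Z2" "Jordan_Normal_Form.DL_Rank" "Jordan_Normal_Form.DL_Submatrix"
begin

text \<open>Conventions: the matrix D has dim_row D = K rows and dim_col D = N columns over
  the field F_2 = bit; users/rows are indexed 0..K-1 and files/columns 0..N-1.
  Subfiles F i W are vectors over F_2 of a common length, modelled as functions
  'm => bit for a finite index type 'm.\<close>

definition rank2 :: "bit mat \<Rightarrow> nat" where
  "rank2 A = vec_space.rank (dim_row A) A"

definition rowsub :: "bit mat \<Rightarrow> nat set \<Rightarrow> bit mat" where
  "rowsub D S = submatrix D S {..<dim_col D}"

definition blk :: "bit mat \<Rightarrow> (nat \<Rightarrow> nat set \<Rightarrow> 'm \<Rightarrow> bit) \<Rightarrow> nat \<Rightarrow> nat set \<Rightarrow> 'm \<Rightarrow> bit" where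
  "blk D F k W = (\<lambda>j. \<Sum>n<dim_col D. D $$ (k, n) * F n W j)"

definition msg :: "bit mat \<Rightarrow> (nat \<Rightarrow> nat set \<Rightarrow> 'm \<Rightarrow> bit) \<Rightarrow> nat set \<Rightarrow> 'm \<Rightarrow> bit" where
  "msg D F S = (\<lambda>j. \<Sum>k\<in>S. blk D F k (S - {k}) j)"

definition Vfam :: "bit mat \<Rightarrow> nat set \<Rightarrow> nat set \<Rightarrow> nat set set" where
  "Vfam D L B = {V. V \<subseteq> B \<and> card V = card L \<and> rank2 (rowsub D V) = card L}"

end

theory Submission
  imports Defs
begin

text \<open>Let r be the rank of D. Expanding the messages into blocks, the sum over all independent
  r-subsets V of B becomes a sum over pairs (V, k) with k in B - V, that is, over (r+1)-subsets
  U = V \<union> {k} of B together with a row k whose removal leaves U independent. Such a U has more rows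
  than the rank, so it contains a vanishing subset; the removable rows are exactly the members of this
  unique circuit, and their sum is zero, so every U contributes nothing. The rank condition defining
  the family is turned into row independence using row rank \<le> column rank.\<close>

subsection \<open>Row rank and column rank\<close>

context vec_space
begin

lemma maximal_lin_indpt_cols_exists:
  "\<exists>S. maximal S (\<lambda>T. T \<subseteq> set (cols A) \<and> lin_indpt T)"
  using maximal_exists[of "\<lambda>T. T \<subseteq> set (cols A) \<and> lin_indpt T" "card (set (cols A))" "{}"]
  by (meson List.finite_set card_mono empty_iff empty_subsetI finite_lin_indpt2 rev_finite_subset)

lemma cols_subset_span_maximal:
  assumes A: "A \<in> carrier_mat n nc"
    and S: "maximal S (\<lambda>T. T \<subseteq> set (cols A) \<and> lin_indpt T)"
  shows "set (cols A) \<subseteq> span S"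
proof
  fix v assume v: "v \<in> set (cols A)"
  have Ssub: "S \<subseteq> set (cols A)" and Sind: "lin_indpt S" using S unfolding maximal_def by auto
  have Scar: "S \<subseteq> carrier_vec n" using Ssub A cols_dim by blast
  show "v \<in> span S"
  proof (cases "v \<in> S")
    case True
    then show ?thesis using in_own_span[OF Scar] by auto
  next
    case False
    have "lin_dep (S \<union> {v})"
    proof (rule ccontr)
      assume "lin_indpt (S \<union> {v})"
      then have "S \<union> {v} = S" using S v Ssub unfolding maximal_def by blast
      then show False using False by auto
    qed
    then show ?thesis using lin_dep_iff_in_span[OF Scar Sind _ False] A v cols_dim by blast
  qed
qed

lemma rank_le_dim_row:
  assumes A: "A \<in> carrier_mat n nc"
  shows "rank A \<le> n"
proof -
  obtain S where S: "maximal S (\<lambda>T. T \<subseteq> set (cols A) \<and> lin_indpt T)"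
    using maximal_lin_indpt_cols_exists by blast
  have Ssub: "S \<subseteq> set (cols A)" and Sind: "lin_indpt S" using S unfolding maximal_def by auto
  have "S \<subseteq> carrier_vec n" using Ssub A cols_dim by blast
  then have "card S \<le> dim" using li_le_dim(2)[OF fin_dim _ Sind] by simp
  then show ?thesis using rank_card_indpt[OF A S] dim_is_n by simp
qed

lemma full_rank_span_cols:
  assumes A: "A \<in> carrier_mat n nc" and rk: "rank A = n"
  shows "span (set (cols A)) = carrier_vec n"
proof -
  obtain S where S: "maximal S (\<lambda>T. T \<subseteq> set (cols A) \<and> lin_indpt T)"
    using maximal_lin_indpt_cols_exists by blast
  have Ssub: "S \<subseteq> set (cols A)" and Sind: "lin_indpt S" using S unfolding maximal_def by auto
  have Scar: "S \<subseteq> carrier_vec n" using Ssub A cols_dim by blast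
  have colscar: "set (cols A) \<subseteq> carrier_vec n" using A cols_dim by blast
  have "card S = dim" using rk rank_card_indpt[OF A S] dim_is_n by simp
  then have "basis S"
    using dim_li_is_basis[OF fin_dim finite_subset[OF Ssub List.finite_set] Scar Sind] by simp
  then have "carrier_vec n \<subseteq> span (set (cols A))"
    using span_is_monotone[OF Ssub] unfolding basis_def by simp
  then show ?thesis using span_is_subset2[OF colscar] by simp
qed

lemma row_spanning_set_card_le_rank:
  assumes A: "A \<in> carrier_mat n nc"
  obtains G where "G \<subseteq> carrier_vec nc" "finite G" "card G \<le> rank A"
    "\<And>i. i < n \<Longrightarrow> row A i \<in> LinearCombinations.module.span class_ring (module_vec TYPE('a) nc) G"
proof -
  interpret R: vec_space "TYPE('a)" nc .
  obtain S where S: "maximal S (\<lambda>T. T \<subseteq> set (cols A) \<and> lin_indpt T)"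
    using maximal_lin_indpt_cols_exists by blast
  have Ssub: "S \<subseteq> set (cols A)" using S unfolding maximal_def by auto
  have finS: "finite S" using Ssub finite_subset by blast
  have Scar: "S \<subseteq> carrier_vec n" using Ssub A cols_dim by blast
  have "col A j \<in> span S" if "j < nc" for j
    using cols_subset_span_maximal[OF A S] A that by (auto simp: cols_def)
  then have "\<forall>j\<in>{..<nc}. \<exists>a. lincomb a S = col A j"
    using finite_in_span[OF finS Scar] by blast
  then obtain a where a: "\<And>j. j < nc \<Longrightarrow> lincomb (a j) S = col A j" by (metis lessThan_iff)
  \<comment> \<open>If the columns are combinations of S with coefficients a, the rows are combinations of the
    coefficient vectors g s, with coefficients the entries of s.\<close>
  define g where "g s = vec nc (\<lambda>j. a j s)" for s
  have Gcar: "g ` S \<subseteq> carrier_vec nc" unfolding g_def by auto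
  have "row A i \<in> R.span (g ` S)" if i: "i < n" for i
  proof -
    define c where "c h = (\<Sum>s\<in>{s\<in>S. g s = h}. s $ i)" for h
    have "row A i = R.lincomb c (g ` S)"
    proof (rule eq_vecI)
      fix j assume "j < dim_vec (R.lincomb c (g ` S))"
      then have j: "j < nc" using R.lincomb_dim[OF finite_imageI[OF finS] Gcar] by simp
      have "R.lincomb c (g ` S) $ j = (\<Sum>h\<in>g ` S. c h * h $ j)"
        by (rule R.lincomb_index[OF j Gcar])
      also have "\<dots> = (\<Sum>h\<in>g ` S. \<Sum>s\<in>{s\<in>S. g s = h}. s $ i * g s $ j)"
        unfolding c_def sum_distrib_right by (intro sum.cong refl) (simp only: mem_Collect_eq)
      also have "\<dots> = (\<Sum>s\<in>S. s $ i * g s $ j)"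
        by (rule sum.image_gen[symmetric, OF finS])
      also have "\<dots> = (\<Sum>s\<in>S. a j s * s $ i)"
        by (intro sum.cong refl) (simp add: g_def j)
      also have "\<dots> = A $$ (i, j)"
        using lincomb_index[OF i Scar, of "a j"] a[OF j] i j A by simp
      finally show "row A i $ j = R.lincomb c (g ` S) $ j" using i j A by simp
    qed (use R.lincomb_dim[OF finite_imageI[OF finS] Gcar] A in simp)
    then show ?thesis by (rule R.in_spanI[OF _ finite_imageI[OF finS] subset_refl])
  qed
  moreover have "card (g ` S) \<le> rank A"
    using card_image_le[OF finS] rank_card_indpt[OF A S] by simp
  ultimately show thesis using that[OF Gcar finite_imageI[OF finS]] by blast
qed

lemma card_le_rank_if_rows_lin_indpt:
  assumes A: "A \<in> carrier_mat n nc" and Q: "Q \<subseteq> {..<n}" and inj: "inj_on (row A) Q"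
    and ind: "\<not> module.lin_dep class_ring (module_vec TYPE('a) nc) (row A ` Q)"
  shows "card Q \<le> rank A"
proof -
  interpret R: vec_space "TYPE('a)" nc .
  obtain G where G: "G \<subseteq> carrier_vec nc" "finite G" "card G \<le> rank A"
    and rows: "\<And>i. i < n \<Longrightarrow> row A i \<in> R.span G"
    using row_spanning_set_card_le_rank[OF A] by blast
  have finQ: "finite Q" using Q finite_subset by blast
  obtain C :: "'a vec set" where "int (card C) \<le> int (card G) - int (card (row A ` Q))"
    using R.replacement[OF finite_imageI[OF finQ] G(2,1) ind] rows Q by blast
  then show ?thesis using card_image[OF inj] G(3) by linarith
qed

end

subsection \<open>Independent rows over F_2\<close>

lemma sum_bit_symmetric_difference:
  fixes f :: "'a \<Rightarrow> bit"
  assumes "finite P" "finite Q"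
  shows "sum f ((P - Q) \<union> (Q - P)) = sum f P + sum f Q"
proof -
  have P: "sum f P = sum f (P \<inter> Q) + sum f (P - Q)" by (rule sum.Int_Diff[OF assms(1)])
  have Q: "sum f Q = sum f (P \<inter> Q) + sum f (Q - P)"
    using sum.Int_Diff[OF assms(2), of f P] by (simp add: Int_commute)
  have PQ: "sum f ((P - Q) \<union> (Q - P)) = sum f (P - Q) + sum f (Q - P)"
    by (rule sum.union_disjoint) (use assms in auto)
  have "y + z = (x + y) + (x + z)" for x y z :: bit
    by (cases x; cases y; cases z) simp_all
  then show ?thesis unfolding P Q PQ .
qed

lemma sum_bit_eq_0_imp_eq_sum_remove:
  fixes g :: "'a \<Rightarrow> bit"
  assumes "finite S" "x \<in> S" "sum g S = 0"
  shows "g x = sum g (S - {x})"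
  using sum.remove[OF assms(1,2), of g] assms(3) eq_iff_diff_eq_0[of "g x"]
  by (simp del: add_bit_eq_xor)

text \<open>Over F_2 a linear combination of rows is the sum of a subset of them, so this says that the
  rows indexed by V are pairwise distinct and linearly independent.\<close>
definition rows_indep :: "bit mat \<Rightarrow> nat set \<Rightarrow> bool" where
  "rows_indep M V \<longleftrightarrow> (\<forall>Q\<subseteq>V. Q \<noteq> {} \<longrightarrow> (\<exists>n<dim_col M. (\<Sum>k\<in>Q. M $$ (k, n)) \<noteq> 0))"

lemma rows_indepD:
  "rows_indep M V \<Longrightarrow> Q \<subseteq> V \<Longrightarrow> Q \<noteq> {} \<Longrightarrow> \<exists>n<dim_col M. (\<Sum>k\<in>Q. M $$ (k, n)) \<noteq> 0"
  unfolding rows_indep_def by blast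

lemma inj_on_row_if_rows_indep:
  assumes M: "M \<in> carrier_mat nr nc" and Q: "Q \<subseteq> {..<nr}" and ind: "rows_indep M Q"
  shows "inj_on (row M) Q"
proof (rule inj_onI, rule ccontr)
  fix k k' assume k: "k \<in> Q" "k' \<in> Q" "row M k = row M k'" "k \<noteq> k'"
  then obtain n where n: "n < dim_col M" "(\<Sum>i\<in>{k, k'}. M $$ (i, n)) \<noteq> 0"
    using rows_indepD[OF ind, of "{k, k'}"] by blast
  have "M $$ (k, n) = M $$ (k', n)"
    using k Q n M by (metis index_row(1) carrier_matD(1) lessThan_iff subsetD)
  then show False using n k(4) by (simp del: add_bit_eq_xor)
qed

lemma lin_indpt_rows_if_rows_indep:
  assumes M: "M \<in> carrier_mat nr nc" and Q: "Q \<subseteq> {..<nr}" and ind: "rows_indep M Q"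
  shows "\<not> module.lin_dep class_ring (module_vec TYPE(bit) nc) (row M ` Q)"
proof
  interpret R: vec_space "TYPE(bit)" nc .
  have inj: "inj_on (row M) Q" by (rule inj_on_row_if_rows_indep[OF M Q ind])
  have finQ: "finite Q" using Q finite_subset by blast
  have car: "row M ` Q \<subseteq> carrier_vec nc" using M by auto
  assume "R.lin_dep (row M ` Q)"
  then obtain a v where a: "R.lincomb a (row M ` Q) = 0\<^sub>v nc" "v \<in> row M ` Q" "a v \<noteq> 0"
    using R.finite_lin_dep[OF finite_imageI[OF finQ] _ car] by auto
  define P where "P = {k\<in>Q. a (row M k) = 1}"
  have "P \<subseteq> Q" "P \<noteq> {}" using a(2,3) unfolding P_def by auto
  then obtain n where n: "n < dim_col M" "(\<Sum>k\<in>P. M $$ (k, n)) \<noteq> 0"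
    using rows_indepD[OF ind] by blast
  have nnc: "n < nc" using n M by auto
  have "0 = R.lincomb a (row M ` Q) $ n" using a(1) nnc by simp
  also have "\<dots> = (\<Sum>w\<in>row M ` Q. a w * w $ n)" using R.lincomb_index[OF nnc car] .
  also have "\<dots> = (\<Sum>k\<in>Q. a (row M k) * row M k $ n)" using sum.reindex[OF inj] by simp
  also have "\<dots> = (\<Sum>k\<in>Q. if a (row M k) = 1 then M $$ (k, n) else 0)"
  proof (rule sum.cong[OF refl])
    fix k assume "k \<in> Q"
    then show "a (row M k) * row M k $ n = (if a (row M k) = 1 then M $$ (k, n) else 0)"
      using Q M nnc by (cases "a (row M k)") (auto simp del: mult_bit_eq_and)
  qed
  also have "\<dots> = (\<Sum>k\<in>P. M $$ (k, n))" unfolding P_def using finQ by (simp add: sum.inter_filter)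
  finally show False using n(2) by simp
qed

lemma card_le_rank2_if_rows_indep:
  assumes M: "M \<in> carrier_mat nr nc" and Q: "Q \<subseteq> {..<nr}" and ind: "rows_indep M Q"
  shows "card Q \<le> rank2 M"
  using vec_space.card_le_rank_if_rows_lin_indpt[OF M Q inj_on_row_if_rows_indep[OF M Q ind]
      lin_indpt_rows_if_rows_indep[OF M Q ind]] M
  unfolding rank2_def by simp

lemma rows_indep_if_rank2_eq_dim_row:
  assumes M: "M \<in> carrier_mat nr nc" and rk: "rank2 M = nr"
  shows "rows_indep M {..<nr}"
  unfolding rows_indep_def
proof (intro allI impI, rule ccontr)
  interpret C: vec_space "TYPE(bit)" nr .
  fix Q assume Q: "Q \<subseteq> {..<nr}" "Q \<noteq> {}" and "\<not> (\<exists>n<dim_col M. (\<Sum>k\<in>Q. M $$ (k, n)) \<noteq> 0)"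
  then have zero: "(\<Sum>i\<in>Q. M $$ (i, j)) = 0" if "j < nc" for j using that M by auto
  obtain i0 where i0: "i0 \<in> Q" using Q by blast
  have finQ: "finite Q" using Q finite_subset by blast
  have colscar: "set (cols M) \<subseteq> carrier_vec nr" using M cols_dim by blast
  have "C.rank M = nr" using rk M unfolding rank2_def by simp
  then have "unit_vec nr i0 \<in> C.span (set (cols M))"
    using C.full_rank_span_cols[OF M] i0 Q by auto
  then obtain a where a: "C.lincomb a (set (cols M)) = unit_vec nr i0"
    using C.finite_in_span[OF List.finite_set colscar] by blast
  \<comment> \<open>Summing the coordinates in Q kills every column, but not the unit vector at i0.\<close>
  have "(1::bit) = (\<Sum>i\<in>Q. unit_vec nr i0 $ i)"
    using finQ i0 Q by (simp add: sum.delta subset_iff)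
  also have "\<dots> = (\<Sum>i\<in>Q. \<Sum>s\<in>set (cols M). a s * s $ i)"
    by (intro sum.cong refl) (use Q in \<open>metis a C.lincomb_index[OF _ colscar] lessThan_iff subsetD\<close>)
  also have "\<dots> = (\<Sum>s\<in>set (cols M). a s * (\<Sum>i\<in>Q. s $ i))"
    by (simp only: sum_distrib_left sum.swap[of _ Q])
  also have "\<dots> = 0"
  proof (intro sum.neutral ballI)
    fix s assume "s \<in> set (cols M)"
    then obtain j where j: "j < nc" "s = col M j" using M by (auto simp: cols_def)
    have "(\<Sum>i\<in>Q. s $ i) = (\<Sum>i\<in>Q. M $$ (i, j))"
      by (intro sum.cong refl) (use Q M j in auto)
    then show "a s * (\<Sum>i\<in>Q. s $ i) = 0" using zero[OF j(1)] by simp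
  qed
  finally show False by simp
qed

lemma rows_indep_reindex:
  assumes p: "bij_betw p I V" and dc: "dim_col M = dim_col D"
    and entries: "\<And>i n. i \<in> I \<Longrightarrow> n < dim_col D \<Longrightarrow> M $$ (i, n) = D $$ (p i, n)"
  shows "rows_indep M I \<longleftrightarrow> rows_indep D V"
proof -
  have "(\<Sum>i\<in>Q. M $$ (i, n)) = (\<Sum>k\<in>p ` Q. D $$ (k, n))"
    if "Q \<subseteq> I" "n < dim_col D" for Q n
  proof -
    have "inj_on p Q" using inj_on_subset[OF bij_betw_imp_inj_on[OF p] that(1)] .
    then show ?thesis using that entries by (simp add: sum.reindex subset_iff)
  qed
  then have "rows_indep M I \<longleftrightarrow>
      (\<forall>Q\<subseteq>I. p ` Q \<noteq> {} \<longrightarrow> (\<exists>n<dim_col D. (\<Sum>k\<in>p ` Q. D $$ (k, n)) \<noteq> 0))"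
    unfolding rows_indep_def dc image_is_empty by (intro all_cong1 imp_cong refl) auto
  also have "\<dots> \<longleftrightarrow> rows_indep D V"
    unfolding rows_indep_def bij_betw_imp_surj_on[OF p, symmetric] all_subset_image ..
  finally show ?thesis .
qed

lemma pick_bij_betw:
  assumes "finite V"
  shows "bij_betw (pick V) {..<card V} V"
proof -
  have inj: "inj_on (pick V) {..<card V}"
  proof (intro inj_onI)
    fix a b assume ab: "a \<in> {..<card V}" "b \<in> {..<card V}" "pick V a = pick V b"
    show "a = b"
    proof (cases a b rule: linorder_cases)
      case less then show ?thesis using pick_mono[of b V a] ab by auto
    next
      case greater then show ?thesis using pick_mono[of a V b] ab by auto
    qed
  qed
  have "pick V ` {..<card V} \<subseteq> V" using pick_in_set by auto
  moreover have "card (pick V ` {..<card V}) = card V" using card_image[OF inj] by simp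
  ultimately have "pick V ` {..<card V} = V" using card_subset_eq[OF assms] by blast
  then show ?thesis using inj unfolding bij_betw_def by simp
qed

lemma pick_lessThan:
  assumes "j < N"
  shows "pick {..<N} j = j"
proof -
  have "{a\<in>{..<N}. a < j} = {..<j}" using assms by auto
  then show ?thesis using pick_card_in_set[of j "{..<N}"] assms by simp
qed

lemma
  assumes "V \<subseteq> {..<dim_row D}"
  shows dim_row_rowsub: "dim_row (rowsub D V) = card V"
    and dim_col_rowsub: "dim_col (rowsub D V) = dim_col D"
proof -
  have "{i. i < dim_row D \<and> i \<in> V} = V" using assms by blast
  then show "dim_row (rowsub D V) = card V" unfolding rowsub_def dim_submatrix by simp
  have "{j. j < dim_col D \<and> j \<in> {..<dim_col D}} = {..<dim_col D}" by blast
  then show "dim_col (rowsub D V) = dim_col D" unfolding rowsub_def dim_submatrix by simp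
qed

lemma rowsub_index:
  assumes V: "V \<subseteq> {..<dim_row D}" and i: "i < card V" and j: "j < dim_col D"
  shows "rowsub D V $$ (i, j) = D $$ (pick V i, j)"
  using submatrix_index[of i D V j "{..<dim_col D}"] pick_lessThan[OF j] i j
    dim_row_rowsub[OF V] dim_col_rowsub[OF V]
  unfolding rowsub_def dim_submatrix by simp

lemma rank2_rowsub_eq_card_iff:
  assumes V: "V \<subseteq> {..<dim_row D}"
  shows "rank2 (rowsub D V) = card V \<longleftrightarrow> rows_indep D V"
proof -
  have M: "rowsub D V \<in> carrier_mat (card V) (dim_col D)"
    using dim_row_rowsub[OF V] dim_col_rowsub[OF V] by blast
  have iff: "rows_indep (rowsub D V) {..<card V} \<longleftrightarrow> rows_indep D V"
    by (rule rows_indep_reindex[OF pick_bij_betw[OF finite_subset[OF V finite_lessThan]]])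
      (simp_all add: dim_col_rowsub[OF V] rowsub_index[OF V])
  show ?thesis
  proof
    assume "rank2 (rowsub D V) = card V"
    then show "rows_indep D V" using rows_indep_if_rank2_eq_dim_row[OF M] iff by simp
  next
    assume "rows_indep D V"
    then have "card {..<card V} \<le> rank2 (rowsub D V)"
      using iff card_le_rank2_if_rows_indep[OF M] by blast
    then show "rank2 (rowsub D V) = card V"
      using vec_space.rank_le_dim_row[OF M] unfolding rank2_def by (simp add: dim_row_rowsub[OF V])
  qed
qed

subsection \<open>The circuit argument\<close>

lemma sum_rows_removable_eq_0:
  assumes finU: "finite U" and dep: "\<not> rows_indep D U" and n: "n < dim_col D"
  shows "(\<Sum>k | k \<in> U \<and> rows_indep D (U - {k}). D $$ (k, n)) = 0"
proof (cases "{k. k \<in> U \<and> rows_indep D (U - {k})} = {}")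
  case False
  then obtain k0 where k0: "k0 \<in> U" "rows_indep D (U - {k0})" by blast
  obtain Q where Q: "Q \<subseteq> U" "Q \<noteq> {}" and zero: "\<forall>n<dim_col D. (\<Sum>k\<in>Q. D $$ (k, n)) = 0"
    using dep unfolding rows_indep_def by auto
  have finQ: "finite Q" using Q(1) finU finite_subset by blast
  \<comment> \<open>Q is the only vanishing subset of U: the symmetric difference with another one would be a
    vanishing subset of the independent set U - {k0}.\<close>
  have "k \<in> Q" if "k \<in> U" "rows_indep D (U - {k})" for k
  proof (rule ccontr)
    assume "k \<notin> Q"
    then show False using rows_indepD[OF that(2), of Q] Q zero by blast
  qed
  moreover have "rows_indep D (U - {k})" if kQ: "k \<in> Q" for k
    unfolding rows_indep_def
  proof (intro allI impI, rule ccontr)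
    fix P assume P: "P \<subseteq> U - {k}" "P \<noteq> {}"
      and "\<not> (\<exists>n<dim_col D. (\<Sum>k\<in>P. D $$ (k, n)) \<noteq> 0)"
    then have zeroP: "\<forall>n<dim_col D. (\<Sum>k\<in>P. D $$ (k, n)) = 0" by blast
    have finP: "finite P" using P(1) finU finite_subset by blast
    have k0P: "k0 \<in> P" and k0Q: "k0 \<in> Q"
      using rows_indepD[OF k0(2), of P] rows_indepD[OF k0(2), of Q] P Q zero zeroP by blast+
    define X where "X = (P - Q) \<union> (Q - P)"
    have "X \<subseteq> U - {k0}" "X \<noteq> {}" unfolding X_def using P Q k0P k0Q kQ by auto
    moreover have "(\<Sum>i\<in>X. D $$ (i, n)) = 0" if "n < dim_col D" for n
      unfolding X_def sum_bit_symmetric_difference[OF finP finQ] using that zero zeroP by simp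
    ultimately show False using rows_indepD[OF k0(2)] by blast
  qed
  ultimately have "{k. k \<in> U \<and> rows_indep D (U - {k})} = Q" using Q(1) by blast
  then show ?thesis using zero n by simp
qed (metis sum.empty)

lemma sum_insert_pairs_eq:
  assumes finB: "finite B" and FF: "FF \<subseteq> Pow B"
  shows "(\<Sum>V\<in>FF. \<Sum>k\<in>B - V. f (insert k V) k)
    = (\<Sum>U\<in>Pow B. \<Sum>k | k \<in> U \<and> U - {k} \<in> FF. f U k)"
proof -
  have finFF: "finite FF" using finite_subset[OF FF] finB by simp
  have "(\<Sum>V\<in>FF. \<Sum>k\<in>B - V. f (insert k V) k) = (\<Sum>(V, k)\<in>Sigma FF (\<lambda>V. B - V). f (insert k V) k)"
    by (rule sum.Sigma[OF finFF]) (use finB in auto)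
  also have "\<dots> = (\<Sum>(U, k)\<in>Sigma (Pow B) (\<lambda>U. {k. k \<in> U \<and> U - {k} \<in> FF}). f U k)"
  proof (rule sum.reindex_bij_witness[where i = "\<lambda>(U, k). (U - {k}, k)" and j = "\<lambda>(V, k). (insert k V, k)"],
      goal_cases)
    case (1 Vk)
    then show ?case by (cases Vk) auto
  next
    case (2 Vk)
    obtain V k where Vk: "Vk = (V, k)" by fastforce
    have "V \<subseteq> B" "k \<in> B" "k \<notin> V" "V \<in> FF" using 2 FF unfolding Vk by auto
    then show ?case unfolding Vk by (simp add: insert_Diff_if)
  next
    case (3 Uk)
    then show ?case by (cases Uk) (simp add: insert_absorb)
  next
    case (4 Uk)
    then show ?case by (cases Uk) auto
  next
    case (5 Vk)
    then show ?case by (cases Vk) simp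
  qed
  also have "\<dots> = (\<Sum>U\<in>Pow B. \<Sum>k | k \<in> U \<and> U - {k} \<in> FF. f U k)"
    by (rule sum.Sigma[symmetric]) (use finB in \<open>auto intro: finite_subset\<close>)
  finally show ?thesis .
qed

lemma sum_msg_indep_complements_eq_0:
  assumes B: "B \<subseteq> {..<dim_row D}"
  shows "(\<Sum>V | V \<subseteq> B \<and> card V = rank2 D \<and> rows_indep D V. msg D F (B - V) j) = 0"
proof -
  define r where "r = rank2 D"
  define FF where "FF = {V. V \<subseteq> B \<and> card V = r \<and> rows_indep D V}"
  define f where "f U k = (\<Sum>n<dim_col D. D $$ (k, n) * F n (B - U) j)" for U k
  define R where "R U = {k. k \<in> U \<and> U - {k} \<in> FF}" for U
  have finB: "finite B" using B finite_subset by blast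
  have "msg D F (B - V) j = (\<Sum>k\<in>B - V. f (insert k V) k)" for V
    by (simp add: msg_def blk_def f_def Diff_insert[symmetric])
  then have "(\<Sum>V\<in>FF. msg D F (B - V) j) = (\<Sum>V\<in>FF. \<Sum>k\<in>B - V. f (insert k V) k)"
    by simp
  also have "\<dots> = (\<Sum>U\<in>Pow B. \<Sum>k\<in>R U. f U k)"
    unfolding R_def by (rule sum_insert_pairs_eq[OF finB]) (auto simp: FF_def)
  also have "\<dots> = (\<Sum>U\<in>Pow B. \<Sum>n<dim_col D. (\<Sum>k\<in>R U. D $$ (k, n)) * F n (B - U) j)"
    unfolding f_def by (simp only: sum.swap[of _ "R _"] sum_distrib_right)
  also have "\<dots> = 0"
  proof (intro sum.neutral ballI)
    fix U n assume U: "U \<in> Pow B" and n: "n \<in> {..<dim_col D}"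
    have "(\<Sum>k\<in>R U. D $$ (k, n)) = 0"
    proof (cases "R U = {}")
      case False
      then obtain k0 where k0: "k0 \<in> U" "U - {k0} \<in> FF" unfolding R_def by blast
      have finU: "finite U" using U finB finite_subset by blast
      have "card (U - {k0}) = r" using k0 unfolding FF_def by blast
      then have cardU: "card U = Suc r" using card_Suc_Diff1[OF finU k0(1)] by simp
      have "\<not> rows_indep D U"
      proof
        assume "rows_indep D U"
        moreover have "U \<subseteq> {..<dim_row D}" using U B by blast
        ultimately have "card U \<le> rank2 D"
          using card_le_rank2_if_rows_indep[OF carrier_mat_triv] by blast
        then show False using cardU unfolding r_def by simp
      qed
      moreover have "R U = {k. k \<in> U \<and> rows_indep D (U - {k})}"
        using U cardU unfolding R_def FF_def by auto
      ultimately show ?thesis using sum_rows_removable_eq_0[OF finU] n by simp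
    qed simp
    then show "(\<Sum>k\<in>R U. D $$ (k, n)) * F n (B - U) j = 0" by simp
  qed
  finally show ?thesis unfolding FF_def r_def .
qed

lemma Vfam_eq_rows_indep:
  assumes "B \<subseteq> {..<dim_row D}" and "card L = rank2 D"
  shows "Vfam D L B = {V. V \<subseteq> B \<and> card V = rank2 D \<and> rows_indep D V}"
proof -
  have "rank2 (rowsub D V) = rank2 D \<longleftrightarrow> rows_indep D V" if "V \<subseteq> B" "card V = rank2 D" for V
    using rank2_rowsub_eq_card_iff[OF subset_trans[OF that(1) assms(1)]] that(2) by simp
  then show ?thesis unfolding Vfam_def assms(2) by (intro Collect_cong) blast
qed

theorem mainTheorem6:
  fixes D :: "bit mat" and t :: nat and L A :: "nat set"
    and F :: "nat \<Rightarrow> nat set \<Rightarrow> 'm::finite \<Rightarrow> bit"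
  assumes "t < dim_row D"
    and "L \<subseteq> {..<dim_row D}"
    and "card L = rank2 (rowsub D L)"
    and "rank2 (rowsub D L) = rank2 D"
    and "A \<subseteq> {..<dim_row D} - L"
    and "card A = t + 1"
  shows "(\<lambda>j. \<Sum>V\<in>Vfam D L (L \<union> A). msg D F ((L \<union> A) - V) j) = (\<lambda>j. 0)
    \<and> msg D F A = (\<lambda>j. \<Sum>V\<in>Vfam D L (L \<union> A) - {L}. msg D F ((L \<union> A) - V) j)
    \<and> (\<forall>V\<in>Vfam D L (L \<union> A) - {L}. ((L \<union> A) - V) \<inter> L \<noteq> {})"
proof -
  define B where "B = L \<union> A"
  have B: "B \<subseteq> {..<dim_row D}" unfolding B_def using assms(2,5) by auto
  have finB: "finite B" using B finite_subset by blast
  have Vfam: "Vfam D L B = {V. V \<subseteq> B \<and> card V = rank2 D \<and> rows_indep D V}"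
    using Vfam_eq_rows_indep[OF B] assms(3,4) by simp
  have L: "L \<in> Vfam D L B" unfolding Vfam_def B_def using assms(3) by auto
  have finVfam: "finite (Vfam D L B)"
    using finite_subset[of "Vfam D L B" "Pow B"] finB unfolding Vfam_def by auto
  have zero: "(\<Sum>V\<in>Vfam D L B. msg D F (B - V) j) = 0" for j
    unfolding Vfam by (rule sum_msg_indep_complements_eq_0[OF B])
  have BL: "B - L = A" unfolding B_def using assms(5) by auto
  have msgA: "msg D F A j = (\<Sum>V\<in>Vfam D L B - {L}. msg D F (B - V) j)" for j
    using sum_bit_eq_0_imp_eq_sum_remove[OF finVfam L zero] BL by simp
  have "(B - V) \<inter> L \<noteq> {}" if V: "V \<in> Vfam D L B - {L}" for V
  proof
    assume "(B - V) \<inter> L = {}"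
    then have "L \<subseteq> V" unfolding B_def by blast
    moreover have "finite V" "card V = card L" using V finB finite_subset unfolding Vfam_def by auto
    ultimately have "L = V" using card_subset_eq by metis
    then show False using V by blast
  qed
  then show ?thesis using zero msgA unfolding B_def[symmetric] by (auto simp: fun_eq_iff)
qed

end
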